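(* Let $\mathcal{G}=(\mathcal{V},\mathcal{E})$ be a graph with node feature vectors $\mathbf{x}_v\in\mathbb{R}^F$ ($v\in\mathcal{V}$), let $\mathcal{V}_L\subseteq\mathcal{V}$ be the set of labeled nodes with one-hot labels $\mathbf{y}_v\in\{0,1\}^C$, and consider a $k$-layer message-passing GNN with layer parameters $\Theta_1,\dots,\Theta_k$, trained on the supervised loss $L_B=-\sum_{v\in\mathcal{V}_L}\sum_{c=1}^C y_{v,c}\log\hat y_{v,c}$ by a training algorithm (gradient updates) that accesses the data only through $L_B$. Let $\Theta^*=\{\Theta_1,\dots,\Theta_k\}$ be the optimal parameters computed by this training algorithm. Then $\Theta^*$ is a function of $\mathbf{X}(\mathcal{N}_k(\mathcal{V}_L))$ and $\mathbf{Y}(\mathcal{V}_L)$ only; in particular, changes in the inputs $\mathbf{X}(\mathcal{V}\setminus\mathcal{N}_k(\mathcal{V}_L))$ do not affect $\Theta^*$.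
   Context: A $k$-layer message-passing GNN computes node representations by $\mathbf{h}_{v,0}=\mathbf{x}_v$ and, for $l=1,\dots,k$, $\mathbf{h}_{v,l}=f_{\Theta_l}\big(\mathbf{h}_{v,l-1},\{\mathbf{h}_{u,l-1}: u\in\mathcal{N}(v)\}\big)$, where $\mathcal{N}(v)$ is the set of graph neighbors of $v$ and $f_{\Theta_l}$ is a learnable aggregator with parameters $\Theta_l$; the prediction $\hat{\mathbf{y}}_v\in\mathbb{R}^C$ (a probability vector over $C$ classes) is computed from the final representation $\mathbf{h}_{v,k}$. $\mathcal{N}_k(v)$ denotes the $k$-hop neighborhood of $v$ (nodes at graph distance at most $k$ from $v$, including $v$); for $S\subseteq\mathcal{V}$, $\mathcal{N}_k(S)=\bigcup_{v\in S}\mathcal{N}_k(v)$, $\mathbf{X}(S)=\{\mathbf{x}_v:v\in S\}$, and $\mathbf{Y}(\mathcal{V}_L)=\{\mathbf{y}_v: v\in\mathcal{V}_L\}$. *)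

theory Defs
  imports "HOL-Analysis.Analysis"
begin

definition nbhd :: "('v \<times> 'v) set \<Rightarrow> 'v \<Rightarrow> 'v set" where
  "nbhd E v = {u. (v, u) \<in> E}"

definition khop :: "('v \<times> 'v) set \<Rightarrow> nat \<Rightarrow> 'v \<Rightarrow> 'v set" where
  "khop E k v = {u. \<exists>j\<le>k. (v, u) \<in> E ^^ j}"

definition khop_set :: "('v \<times> 'v) set \<Rightarrow> nat \<Rightarrow> 'v set \<Rightarrow> 'v set" where
  "khop_set E k S = (\<Union>v\<in>S. khop E k v)"

primrec gnn_rep ::
  "('p \<Rightarrow> 'h \<Rightarrow> 'h set \<Rightarrow> 'h) \<Rightarrow> ('v \<times> 'v) set \<Rightarrow> ('v \<Rightarrow> 'h) \<Rightarrow> (nat \<Rightarrow> 'p)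
    \<Rightarrow> nat \<Rightarrow> 'v \<Rightarrow> 'h" where
  "gnn_rep f E X \<Theta> 0 v = X v"
| "gnn_rep f E X \<Theta> (Suc l) v =
     f (\<Theta> (Suc l)) (gnn_rep f E X \<Theta> l v) ((\<lambda>u. gnn_rep f E X \<Theta> l u) ` nbhd E v)"

definition loss_B ::
  "('p \<Rightarrow> 'h \<Rightarrow> 'h set \<Rightarrow> 'h) \<Rightarrow> ('h \<Rightarrow> 'c::finite \<Rightarrow> real) \<Rightarrow> nat \<Rightarrow>
   ('v \<times> 'v) set \<Rightarrow> 'v set \<Rightarrow> ('v \<Rightarrow> 'h) \<Rightarrow> ('v \<Rightarrow> 'c \<Rightarrow> real) \<Rightarrow> (nat \<Rightarrow> 'p) \<Rightarrow> real" where
  "loss_B f readout k E VL X Y \<Theta> =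
     - (\<Sum>v\<in>VL. \<Sum>c\<in>UNIV. Y v c * ln (readout (gnn_rep f E X \<Theta> k v) c))"

definition one_hot :: "('c \<Rightarrow> real) \<Rightarrow> bool" where
  "one_hot y \<longleftrightarrow> (\<exists>c. y = (\<lambda>c'. if c' = c then 1 else 0))"

end

theory Submission
  imports Defs
begin

text \<open>By induction on the layer, the representation of v after l layers depends only on the
  features in the l-hop neighbourhood of v. Hence the loss, as a function of the parameters,
  only sees the features on the k-hop neighbourhood of the labelled nodes and their labels,
  and a training algorithm that accesses the data only through the loss returns the same
  parameters.\<close>

lemma self_in_khop: "v \<in> khop E l v"
  unfolding khop_def by (intro CollectI exI[of _ 0]) simp

lemma khop_mono: "l \<le> m \<Longrightarrow> khop E l v \<subseteq> khop E m v"
  unfolding khop_def using le_trans by blast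

lemma khop_nbhd_subset_khop_Suc: "u \<in> nbhd E v \<Longrightarrow> khop E l u \<subseteq> khop E (Suc l) v"
proof
  fix w assume u: "u \<in> nbhd E v" and "w \<in> khop E l u"
  then obtain j where j: "j \<le> l" "(u, w) \<in> E ^^ j" unfolding khop_def by auto
  from u have "(v, u) \<in> E" unfolding nbhd_def by simp
  with j(2) have "(v, w) \<in> E ^^ Suc j" using relpow_Suc_I2 by metis
  with j(1) show "w \<in> khop E (Suc l) v" unfolding khop_def mem_Collect_eq by (intro exI[of _ "Suc j"]) simp
qed

lemma gnn_rep_cong_khop:
  assumes "\<forall>w\<in>khop E l v. X' w = X w"
  shows "gnn_rep f E X' \<Theta> l v = gnn_rep f E X \<Theta> l v"
  using assms
proof (induction l arbitrary: v)
  case 0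
  then show ?case using self_in_khop[of v E 0] by simp
next
  case (Suc l)
  have self: "gnn_rep f E X' \<Theta> l v = gnn_rep f E X \<Theta> l v"
    using Suc.IH Suc.prems khop_mono[of l "Suc l" E v] by auto
  have "gnn_rep f E X' \<Theta> l u = gnn_rep f E X \<Theta> l u" if "u \<in> nbhd E v" for u
    using Suc.IH Suc.prems khop_nbhd_subset_khop_Suc[OF that, of l] by auto
  then have "(\<lambda>u. gnn_rep f E X' \<Theta> l u) ` nbhd E v = (\<lambda>u. gnn_rep f E X \<Theta> l u) ` nbhd E v"
    by (rule image_cong[OF refl])
  with self show ?case by simp
qed

lemma loss_B_cong_khop_set:
  assumes "\<forall>v\<in>khop_set E k VL. X' v = X v" and "\<forall>v\<in>VL. Y' v = Y v"
  shows "loss_B f readout k E VL X' Y' = loss_B f readout k E VL X Y"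
proof
  fix \<Theta>
  have "gnn_rep f E X' \<Theta> k v = gnn_rep f E X \<Theta> k v" if "v \<in> VL" for v
    using assms(1) that by (intro gnn_rep_cong_khop) (auto simp: khop_set_def)
  with assms(2) show "loss_B f readout k E VL X' Y' \<Theta> = loss_B f readout k E VL X Y \<Theta>"
    unfolding loss_B_def by (intro arg_cong[where f = uminus] sum.cong) auto
qed

theorem proposition1:
  fixes V VL :: "'v set" and E :: "('v \<times> 'v) set" and k :: nat
    and f :: "'p \<Rightarrow> 'h \<Rightarrow> 'h set \<Rightarrow> 'h"
    and readout :: "'h \<Rightarrow> 'c::finite \<Rightarrow> real"
    and train :: "((nat \<Rightarrow> 'p) \<Rightarrow> real) \<Rightarrow> (nat \<Rightarrow> 'p)"
    and X X' :: "'v \<Rightarrow> 'h" and Y Y' :: "'v \<Rightarrow> 'c \<Rightarrow> real"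
  assumes "finite V" and "E \<subseteq> V \<times> V" and "sym E" and "VL \<subseteq> V"
    and "\<forall>v\<in>VL. one_hot (Y v)" and "\<forall>v\<in>VL. one_hot (Y' v)"
    and "\<forall>v\<in>khop_set E k VL. X' v = X v"
    and "\<forall>v\<in>VL. Y' v = Y v"
  shows "train (loss_B f readout k E VL X' Y') = train (loss_B f readout k E VL X Y)"
  by (simp only: loss_B_cong_khop_set[OF assms(7,8)])

end
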